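(* Let $G$ be a discrete group and $X$ a minimal $G$-flow, and suppose there is an infinite subgroup $H\le G$ such that the restricted action $H\curvearrowright X$ is equicontinuous. Then $X$ has the separated covering property.
   Context: A $G$-flow is a compact Hausdorff space with an action of $G$ by homeomorphisms; it is minimal if every orbit is dense. An action $H\curvearrowright X$ is equicontinuous if for every neighborhood $U$ of the diagonal in $X\times X$ there is a neighborhood $V$ of the diagonal such that $(x,y)\in V$ implies $(hx,hy)\in U$ for all $h\in H$. For finite $D\subseteq G$, a set $S\subseteq G$ is $D$-separated if $Dg\cap Dh=\emptyset$ for distinct $g,h\in S$. A minimal $G$-flow has the separated covering property if for every finite $D\subseteq G$ and non-empty open $U$ there is a $D$-separated $S\subseteq G$ with $S^{-1}U=X$. *)

theory Defs
  imports "HOL-Analysis.Analysis" "HOL-Algebra.Group"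
begin

definition G_flow :: "('g, 'b) monoid_scheme \<Rightarrow> 'a topology \<Rightarrow> ('g \<Rightarrow> 'a \<Rightarrow> 'a) \<Rightarrow> bool" where
  "G_flow G X act \<longleftrightarrow>
     group G \<and> compact_space X \<and> Hausdorff_space X \<and>
     (\<forall>g \<in> carrier G. homeomorphic_map X X (act g)) \<and>
     (\<forall>x \<in> topspace X. act \<one>\<^bsub>G\<^esub> x = x) \<and>
     (\<forall>g \<in> carrier G. \<forall>h \<in> carrier G. \<forall>x \<in> topspace X.
        act (g \<otimes>\<^bsub>G\<^esub> h) x = act g (act h x))"

definition minimal_flow :: "('g, 'b) monoid_scheme \<Rightarrow> 'a topology \<Rightarrow> ('g \<Rightarrow> 'a \<Rightarrow> 'a) \<Rightarrow> bool" where
  "minimal_flow G X act \<longleftrightarrow>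
     G_flow G X act \<and>
     (\<forall>x \<in> topspace X. X closure_of ((\<lambda>g. act g x) ` carrier G) = topspace X)"

definition diag_nbhd :: "'a topology \<Rightarrow> ('a \<times> 'a) set \<Rightarrow> bool" where
  "diag_nbhd X U \<longleftrightarrow>
     U \<subseteq> topspace X \<times> topspace X \<and>
     (\<exists>W. openin (prod_topology X X) W \<and> {(x, x) | x. x \<in> topspace X} \<subseteq> W \<and> W \<subseteq> U)"

definition equicontinuous_action :: "'g set \<Rightarrow> 'a topology \<Rightarrow> ('g \<Rightarrow> 'a \<Rightarrow> 'a) \<Rightarrow> bool" where
  "equicontinuous_action H X act \<longleftrightarrow>
     (\<forall>U. diag_nbhd X U \<longrightarrow>
        (\<exists>V. diag_nbhd X V \<and>
           (\<forall>x y. (x, y) \<in> V \<longrightarrow> (\<forall>h \<in> H. (act h x, act h y) \<in> U))))"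

definition separated :: "('g, 'b) monoid_scheme \<Rightarrow> 'g set \<Rightarrow> 'g set \<Rightarrow> bool" where
  "separated G D S \<longleftrightarrow>
     (\<forall>g \<in> S. \<forall>h \<in> S. g \<noteq> h \<longrightarrow>
        (\<lambda>d. d \<otimes>\<^bsub>G\<^esub> g) ` D \<inter> (\<lambda>d. d \<otimes>\<^bsub>G\<^esub> h) ` D = {})"

definition separated_covering_property ::
    "('g, 'b) monoid_scheme \<Rightarrow> 'a topology \<Rightarrow> ('g \<Rightarrow> 'a \<Rightarrow> 'a) \<Rightarrow> bool" where
  "separated_covering_property G X act \<longleftrightarrow>
     (\<forall>D U. finite D \<and> D \<subseteq> carrier G \<and> openin X U \<and> U \<noteq> {} \<longrightarrow>
        (\<exists>S \<subseteq> carrier G. separated G D S \<and>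
           (\<Union>s \<in> S. act (inv\<^bsub>G\<^esub> s) ` U) = topspace X))"

end

theory Submission
  imports Defs
begin

text \<open>Fix a finite \<open>D\<close> and a non-empty open \<open>U \<ni> x\<^sub>0\<close>. Equicontinuity of \<open>H\<close>, tested against the
  neighbourhood \<open>U \<times> U \<union> (X - {x\<^sub>0}) \<times> (X - {x\<^sub>0})\<close> of the diagonal, yields finitely many open sets
  \<open>A\<close> such that \<open>y \<in> A\<close> and \<open>h\<^sup>-\<^sup>1 x\<^sub>0 \<in> A\<close> force \<open>h y \<in> U\<close>. As \<open>H\<close> is infinite, one of them, \<open>V\<close>,
  contains \<open>h\<^sup>-\<^sup>1 x\<^sub>0\<close> for all \<open>h\<close> in an infinite set \<open>R \<subseteq> H\<close>, so \<open>r V \<subseteq> U\<close> for \<open>r \<in> R\<close>.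
  By minimality and compactness \<open>X = f\<^sub>1\<^sup>-\<^sup>1 V \<union> \<dots> \<union> f\<^sub>n\<^sup>-\<^sup>1 V\<close>. Since each condition
  \<open>D r f \<inter> D s = {}\<close> excludes only finitely many \<open>r\<close>, we can pick \<open>r\<^sub>i \<in> R\<close> one after the other
  so that \<open>S = {r\<^sub>1 f\<^sub>1, \<dots>, r\<^sub>n f\<^sub>n}\<close> is \<open>D\<close>-separated, and then
  \<open>S\<^sup>-\<^sup>1 U \<supseteq> \<Union>\<^sub>i f\<^sub>i\<^sup>-\<^sup>1 r\<^sub>i\<^sup>-\<^sup>1 r\<^sub>i V = X\<close>.\<close>

lemma G_flow_group: "G_flow G X act \<Longrightarrow> group G"
  unfolding G_flow_def by blast

lemma G_flow_act_in_topspace: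
  assumes "G_flow G X act" "g \<in> carrier G" "x \<in> topspace X"
  shows "act g x \<in> topspace X"
  using assms homeomorphic_imp_surjective_map unfolding G_flow_def by blast

lemma G_flow_openin_image:
  assumes "G_flow G X act" "g \<in> carrier G" "openin X V"
  shows "openin X (act g ` V)"
  using assms homeomorphic_imp_open_map unfolding G_flow_def open_map_def by blast

lemma G_flow_act_mult:
  assumes "G_flow G X act" "g \<in> carrier G" "h \<in> carrier G" "x \<in> topspace X"
  shows "act (g \<otimes>\<^bsub>G\<^esub> h) x = act g (act h x)"
  using assms unfolding G_flow_def by blast

lemma G_flow_act_inv_act:
  assumes "G_flow G X act" "g \<in> carrier G" "x \<in> topspace X"
  shows "act (inv\<^bsub>G\<^esub> g) (act g x) = x"
proof -
  interpret group G using G_flow_group[OF assms(1)] .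
  have "act (inv\<^bsub>G\<^esub> g) (act g x) = act (inv\<^bsub>G\<^esub> g \<otimes>\<^bsub>G\<^esub> g) x"
    using G_flow_act_mult assms by (metis inv_closed)
  also have "\<dots> = x" using assms unfolding G_flow_def by simp
  finally show ?thesis .
qed

lemma minimal_flow_finite_translates_cover:
  assumes min: "minimal_flow G X act" and V: "openin X V" "V \<noteq> {}"
  shows "\<exists>F. finite F \<and> F \<subseteq> carrier G \<and> topspace X \<subseteq> (\<Union>f\<in>F. act (inv\<^bsub>G\<^esub> f) ` V)"
proof -
  have flow: "G_flow G X act" using min unfolding minimal_flow_def by blast
  interpret group G using G_flow_group[OF flow] .
  have covers: "topspace X \<subseteq> (\<Union>g\<in>carrier G. act (inv\<^bsub>G\<^esub> g) ` V)"
  proof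
    fix x assume x: "x \<in> topspace X"
    have "X closure_of ((\<lambda>g. act g x) ` carrier G) = topspace X"
      using min x unfolding minimal_flow_def by blast
    then have "V \<inter> X closure_of ((\<lambda>g. act g x) ` carrier G) \<noteq> {}"
      using V openin_subset by (metis inf.absorb_iff1)
    then have "V \<inter> (\<lambda>g. act g x) ` carrier G \<noteq> {}"
      using openin_Int_closure_of_eq_empty[OF V(1)] by blast
    then obtain g where g: "g \<in> carrier G" "act g x \<in> V" by blast
    then have "x \<in> act (inv\<^bsub>G\<^esub> g) ` V"
      using G_flow_act_inv_act[OF flow g(1) x] by (metis image_eqI)
    then show "x \<in> (\<Union>g\<in>carrier G. act (inv\<^bsub>G\<^esub> g) ` V)" using g(1) by blast
  qed
  have "\<forall>W \<in> (\<lambda>g. act (inv\<^bsub>G\<^esub> g) ` V) ` carrier G. openin X W"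
    using G_flow_openin_image[OF flow _ V(1)] by auto
  moreover have "compact_space X" using flow unfolding G_flow_def by blast
  ultimately obtain \<F> where \<F>: "finite \<F>" "\<F> \<subseteq> (\<lambda>g. act (inv\<^bsub>G\<^esub> g) ` V) ` carrier G"
      "topspace X \<subseteq> \<Union>\<F>"
    using covers unfolding compact_space_alt by meson
  then obtain F where "F \<subseteq> carrier G" "finite F" "\<F> = (\<lambda>g. act (inv\<^bsub>G\<^esub> g) ` V) ` F"
    by (meson finite_subset_image)
  with \<F>(3) show ?thesis by blast
qed

lemma diag_nbhd_separating_point:
  assumes "Hausdorff_space X" "openin X U" "x\<^sub>0 \<in> U"
  shows "diag_nbhd X (U \<times> U \<union> (topspace X - {x\<^sub>0}) \<times> (topspace X - {x\<^sub>0}))"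
proof -
  have U: "U \<subseteq> topspace X" using assms(2) openin_subset by blast
  then have "closedin X {x\<^sub>0}"
    using assms(1,3) by (metis Hausdorff_imp_t1_space subsetD t1_space_closedin_singleton)
  then have "openin X (topspace X - {x\<^sub>0})" by (simp add: closedin_def)
  then have "openin (prod_topology X X) (U \<times> U \<union> (topspace X - {x\<^sub>0}) \<times> (topspace X - {x\<^sub>0}))"
    using assms(2) by (simp add: openin_Un openin_prod_Times_iff)
  moreover have "{(x, x) |x. x \<in> topspace X} \<subseteq> U \<times> U \<union> (topspace X - {x\<^sub>0}) \<times> (topspace X - {x\<^sub>0})"
    using assms(3) by auto
  ultimately show ?thesis
    unfolding diag_nbhd_def using U by auto
qed

lemma compact_space_cover_by_small_opens:
  assumes "compact_space X" "diag_nbhd X E"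
  shows "\<exists>\<F>. finite \<F> \<and> (\<forall>A\<in>\<F>. openin X A \<and> A \<times> A \<subseteq> E) \<and> topspace X \<subseteq> \<Union>\<F>"
proof -
  obtain W where W: "openin (prod_topology X X) W" "{(x, x) |x. x \<in> topspace X} \<subseteq> W" "W \<subseteq> E"
    using assms(2) unfolding diag_nbhd_def by blast
  define \<A> where "\<A> = {A. openin X A \<and> A \<times> A \<subseteq> E}"
  have "topspace X \<subseteq> \<Union>\<A>"
  proof
    fix x assume "x \<in> topspace X"
    then have "(x, x) \<in> W" using W(2) by blast
    then obtain A B where "openin X A" "openin X B" "x \<in> A" "x \<in> B" "A \<times> B \<subseteq> W"
      using W(1) unfolding openin_prod_topology_alt by meson
    then have "A \<inter> B \<in> \<A>" "x \<in> A \<inter> B"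
      using W(3) unfolding \<A>_def by auto
    then show "x \<in> \<Union>\<A>" by blast
  qed
  moreover have "\<forall>A\<in>\<A>. openin X A" unfolding \<A>_def by blast
  ultimately obtain \<F> where "finite \<F>" "\<F> \<subseteq> \<A>" "topspace X \<subseteq> \<Union>\<F>"
    using assms(1) unfolding compact_space_alt by meson
  then show ?thesis unfolding \<A>_def by blast
qed

lemma equicontinuous_action_infinite_return_set:
  assumes flow: "G_flow G X act" and HG: "H \<subseteq> carrier G" and H: "infinite H"
    and eq: "equicontinuous_action H X act"
    and U: "openin X U" "U \<noteq> {}"
  shows "\<exists>V R. openin X V \<and> V \<noteq> {} \<and> R \<subseteq> H \<and> infinite R \<and> (\<forall>r\<in>R. act r ` V \<subseteq> U)"
proof -
  interpret group G using G_flow_group[OF flow] .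
  have X: "Hausdorff_space X" "compact_space X" using flow unfolding G_flow_def by blast+
  obtain x\<^sub>0 where x\<^sub>0: "x\<^sub>0 \<in> U" using U(2) by blast
  have x\<^sub>0_top: "x\<^sub>0 \<in> topspace X" using openin_subset[OF U(1)] x\<^sub>0 by blast
  define N where "N = U \<times> U \<union> (topspace X - {x\<^sub>0}) \<times> (topspace X - {x\<^sub>0})"
  have "diag_nbhd X N"
    unfolding N_def using diag_nbhd_separating_point[OF X(1) U(1) x\<^sub>0] .
  then obtain E where E: "diag_nbhd X E"
    and EN: "\<And>x y h. (x, y) \<in> E \<Longrightarrow> h \<in> H \<Longrightarrow> (act h x, act h y) \<in> N"
    using eq unfolding equicontinuous_action_def by meson
  obtain \<F> where \<F>: "finite \<F>" "\<forall>A\<in>\<F>. openin X A \<and> A \<times> A \<subseteq> E" "topspace X \<subseteq> \<Union>\<F>"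
    using compact_space_cover_by_small_opens[OF X(2) E] by blast
  define R where "R A = {h \<in> H. act (inv\<^bsub>G\<^esub> h) x\<^sub>0 \<in> A}" for A
  have "H \<subseteq> (\<Union>A\<in>\<F>. R A)"
  proof
    fix h assume h: "h \<in> H"
    then have "act (inv\<^bsub>G\<^esub> h) x\<^sub>0 \<in> topspace X"
      using G_flow_act_in_topspace[OF flow _ x\<^sub>0_top] HG by blast
    then show "h \<in> (\<Union>A\<in>\<F>. R A)" using \<F>(3) h unfolding R_def by blast
  qed
  then obtain V where V: "V \<in> \<F>" "infinite (R V)"
    using H \<F>(1) by (meson finite_UN_I finite_subset)
  have R_returns: "act r y \<in> U" if r: "r \<in> R V" and y: "y \<in> V" for r y
  proof -
    have rG: "r \<in> carrier G" using r HG unfolding R_def by blast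
    have "(act r y, act r (act (inv\<^bsub>G\<^esub> r) x\<^sub>0)) \<in> N"
      using EN r y V(1) \<F>(2) unfolding R_def by blast
    moreover have "act r (act (inv\<^bsub>G\<^esub> r) x\<^sub>0) = x\<^sub>0"
      using G_flow_act_inv_act[OF flow inv_closed[OF rG] x\<^sub>0_top] rG by simp
    ultimately have "(act r y, x\<^sub>0) \<in> N" by simp
    then show ?thesis unfolding N_def by blast
  qed
  show ?thesis
  proof (intro exI conjI)
    show "openin X V" using V(1) \<F>(2) by blast
    have "R V \<noteq> {}" using V(2) by auto
    then show "V \<noteq> {}" unfolding R_def by blast
    show "R V \<subseteq> H" unfolding R_def by blast
    show "infinite (R V)" using V(2) .
    show "\<forall>r\<in>R V. act r ` V \<subseteq> U" using R_returns by blast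
  qed
qed

lemma separated_iff_pairwise_disjnt:
  "separated G D S \<longleftrightarrow>
     pairwise (\<lambda>g h. disjnt ((\<lambda>d. d \<otimes>\<^bsub>G\<^esub> g) ` D) ((\<lambda>d. d \<otimes>\<^bsub>G\<^esub> h) ` D)) S"
  by (simp add: separated_def pairwise_def disjnt_def)

lemma separated_insert:
  "separated G D (insert s S) \<longleftrightarrow>
     separated G D S \<and>
     (\<forall>t\<in>S. t \<noteq> s \<longrightarrow> disjnt ((\<lambda>d. d \<otimes>\<^bsub>G\<^esub> s) ` D) ((\<lambda>d. d \<otimes>\<^bsub>G\<^esub> t) ` D))"
  by (simp add: separated_iff_pairwise_disjnt pairwise_insert disjnt_commute) blast

context group
begin

lemma separated_insert_right_translate:
  assumes D: "finite D" "D \<subseteq> carrier G" and S: "finite S" "S \<subseteq> carrier G" "separated G D S"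
    and R: "R \<subseteq> carrier G" "infinite R" and f: "f \<in> carrier G"
  shows "\<exists>r\<in>R. separated G D (insert (r \<otimes> f) S)"
proof -
  define bad where "bad = (\<lambda>(s, d\<^sub>1, d\<^sub>2). inv d\<^sub>1 \<otimes> (d\<^sub>2 \<otimes> s) \<otimes> inv f) ` (S \<times> D \<times> D)"
  have "finite bad" unfolding bad_def using S(1) D(1) by simp
  then have "\<not> R \<subseteq> bad" using R(2) finite_subset by blast
  then obtain r where r: "r \<in> R" "r \<notin> bad" by blast
  have "disjnt ((\<lambda>d. d \<otimes> (r \<otimes> f)) ` D) ((\<lambda>d. d \<otimes> s) ` D)" if s: "s \<in> S" for s
  proof (rule ccontr)
    assume "\<not> ?thesis"
    then obtain d\<^sub>1 d\<^sub>2 where d: "d\<^sub>1 \<in> D" "d\<^sub>2 \<in> D" "d\<^sub>1 \<otimes> (r \<otimes> f) = d\<^sub>2 \<otimes> s"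
      unfolding disjnt_def by auto
    have "r = inv d\<^sub>1 \<otimes> (d\<^sub>1 \<otimes> (r \<otimes> f)) \<otimes> inv f"
      using d(1) D(2) r(1) R(1) f by (simp add: m_assoc[symmetric] subsetD) (simp add: m_assoc subsetD)
    then have "r = inv d\<^sub>1 \<otimes> (d\<^sub>2 \<otimes> s) \<otimes> inv f" by (simp only: d(3))
    then have "r \<in> bad"
      using s d(1,2) unfolding bad_def by (intro image_eqI[where x = "(s, d\<^sub>1, d\<^sub>2)"]) auto
    then show False using r(2) by blast
  qed
  then have "separated G D (insert (r \<otimes> f) S)" using S(3) by (simp add: separated_insert)
  then show ?thesis using r(1) by blast
qed

lemma separated_set_meeting_right_translates:
  assumes D: "finite D" "D \<subseteq> carrier G" and R: "R \<subseteq> carrier G" "infinite R"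
    and F: "finite F" "F \<subseteq> carrier G"
  shows "\<exists>S. finite S \<and> S \<subseteq> carrier G \<and> separated G D S \<and> (\<forall>f\<in>F. \<exists>r\<in>R. r \<otimes> f \<in> S)"
  using F
proof (induction F rule: finite_induct)
  case empty
  show ?case by (intro exI[of _ "{}"]) (simp add: separated_def)
next
  case (insert f F)
  then obtain S where S: "finite S" "S \<subseteq> carrier G" "separated G D S"
    "\<forall>f\<in>F. \<exists>r\<in>R. r \<otimes> f \<in> S" by auto
  moreover obtain r where "r \<in> R" "separated G D (insert (r \<otimes> f) S)"
    using separated_insert_right_translate[OF D S(1-3) R] insert.prems by auto
  ultimately show ?case
    using insert.prems R(1) by (intro exI[of _ "insert (r \<otimes> f) S"]) auto
qed

end

lemma G_flow_translates_cover:
  assumes flow: "G_flow G X act" and U: "openin X U" and V: "openin X V"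
    and RU: "\<forall>r\<in>R. act r ` V \<subseteq> U" and RG: "R \<subseteq> carrier G"
    and F: "F \<subseteq> carrier G" "topspace X \<subseteq> (\<Union>f\<in>F. act (inv\<^bsub>G\<^esub> f) ` V)"
    and S: "S \<subseteq> carrier G" "\<forall>f\<in>F. \<exists>r\<in>R. r \<otimes>\<^bsub>G\<^esub> f \<in> S"
  shows "(\<Union>s\<in>S. act (inv\<^bsub>G\<^esub> s) ` U) = topspace X"
proof -
  interpret group G using G_flow_group[OF flow] .
  have "topspace X \<subseteq> (\<Union>s\<in>S. act (inv\<^bsub>G\<^esub> s) ` U)"
  proof
    fix x assume "x \<in> topspace X"
    then obtain f y where f: "f \<in> F" and y: "y \<in> V" and x: "x = act (inv\<^bsub>G\<^esub> f) y" using F(2) by blast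
    obtain r where r: "r \<in> R" "r \<otimes>\<^bsub>G\<^esub> f \<in> S" using S(2) f by blast
    have fG: "f \<in> carrier G" and rG: "r \<in> carrier G" using f F(1) r RG by auto
    have y_top: "y \<in> topspace X" using y openin_subset[OF V] by blast
    have "act (inv\<^bsub>G\<^esub> (r \<otimes>\<^bsub>G\<^esub> f)) (act r y) = act (inv\<^bsub>G\<^esub> f) (act (inv\<^bsub>G\<^esub> r) (act r y))"
      using G_flow_act_mult[OF flow] G_flow_act_in_topspace[OF flow rG y_top] fG rG
      by (simp add: inv_mult_group)
    also have "\<dots> = x" using G_flow_act_inv_act[OF flow rG y_top] x by simp
    finally have "x = act (inv\<^bsub>G\<^esub> (r \<otimes>\<^bsub>G\<^esub> f)) (act r y)" ..
    moreover have "act r y \<in> U" using RU r(1) y by blast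
    ultimately show "x \<in> (\<Union>s\<in>S. act (inv\<^bsub>G\<^esub> s) ` U)" using r(2) by blast
  qed
  moreover have "(\<Union>s\<in>S. act (inv\<^bsub>G\<^esub> s) ` U) \<subseteq> topspace X"
    using G_flow_act_in_topspace[OF flow] S(1) U openin_subset by blast
  ultimately show ?thesis by blast
qed

theorem lemma3p1:
  fixes G :: "('g, 'b) monoid_scheme" and X :: "'a topology" and act :: "'g \<Rightarrow> 'a \<Rightarrow> 'a"
    and H :: "'g set"
  assumes "minimal_flow G X act"
    and "subgroup H G" and "infinite H"
    and "equicontinuous_action H X act"
  shows "separated_covering_property G X act"
  unfolding separated_covering_property_def
proof (intro allI impI)
  fix D U
  assume "finite D \<and> D \<subseteq> carrier G \<and> openin X U \<and> U \<noteq> {}"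
  then have D: "finite D" "D \<subseteq> carrier G" and U: "openin X U" "U \<noteq> {}" by blast+
  have flow: "G_flow G X act" using assms(1) unfolding minimal_flow_def by blast
  have HG: "H \<subseteq> carrier G" using assms(2) by (rule subgroup.subset)
  obtain V R where V: "openin X V" "V \<noteq> {}" and R: "R \<subseteq> H" "infinite R"
    and RU: "\<forall>r\<in>R. act r ` V \<subseteq> U"
    using equicontinuous_action_infinite_return_set[OF flow HG assms(3,4) U] by (elim exE conjE)
  have RG: "R \<subseteq> carrier G" using R(1) HG by blast
  obtain F where F: "finite F" "F \<subseteq> carrier G" "topspace X \<subseteq> (\<Union>f\<in>F. act (inv\<^bsub>G\<^esub> f) ` V)"
    using minimal_flow_finite_translates_cover[OF assms(1) V] by (elim exE conjE)
  obtain S where S: "finite S" "S \<subseteq> carrier G" "separated G D S" "\<forall>f\<in>F. \<exists>r\<in>R. r \<otimes>\<^bsub>G\<^esub> f \<in> S"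
    using group.separated_set_meeting_right_translates[OF G_flow_group[OF flow] D RG R(2) F(1,2)]
    by (elim exE conjE)
  have "(\<Union>s\<in>S. act (inv\<^bsub>G\<^esub> s) ` U) = topspace X"
    using G_flow_translates_cover[OF flow U(1) V(1) RU RG F(2,3) S(2,4)] .
  with S(2,3) show "\<exists>S\<subseteq>carrier G. separated G D S \<and> (\<Union>s\<in>S. act (inv\<^bsub>G\<^esub> s) ` U) = topspace X"
    by blast
qed

end
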